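(* Let $G=(N,E)$ be a finite DAG with influential set $S^{inf.}(G)=\{s_1,\dots,s_m\}$. Then $s_1$ has no out-edges in $G$, and $s_1$ has the maximum progeny in $G$, i.e. $p_{s_1}=\max_{i\in N}p_i$.
   Context: In a DAG $G=(N,E)$ with $N=\{1,\dots,n\}$, $P_i$ is the set of nodes having a directed path to $i$ (including $i$), and $p_i=|P_i|$. Write $p_i\succ p_j$ if $p_i>p_j$, or $p_i=p_j$ and $i<j$. Node $i$ is influential if, in the graph obtained from $G$ by deleting all out-edges of $i$, $p_i\succ p_j$ holds for all $j\ne i$ (progeny measured in that modified graph). The influential set $S^{inf.}(G)=\{s_1,\dots,s_m\}$ consists of all influential nodes, indexed so that $p_{s_1}\succ p_{s_2}\succ\cdots\succ p_{s_m}$, with progeny measured in $G$. *)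

theory Defs
  imports Main
begin

text \<open>A DAG on the node set N = {1..n} with edge relation E (pairs (a,b) mean a -> b).\<close>

definition nodes :: "nat \<Rightarrow> nat set" where
  "nodes n = {1..n}"

definition is_dag :: "nat \<Rightarrow> (nat \<times> nat) set \<Rightarrow> bool" where
  "is_dag n E \<longleftrightarrow> E \<subseteq> nodes n \<times> nodes n \<and> acyclic E"

definition progeny_set :: "nat \<Rightarrow> (nat \<times> nat) set \<Rightarrow> nat \<Rightarrow> nat set" where
  "progeny_set n E i = {j \<in> nodes n. (j, i) \<in> E\<^sup>*}"

definition progeny :: "nat \<Rightarrow> (nat \<times> nat) set \<Rightarrow> nat \<Rightarrow> nat" where
  "progeny n E i = card (progeny_set n E i)"

definition prog_succ :: "(nat \<Rightarrow> nat) \<Rightarrow> nat \<Rightarrow> nat \<Rightarrow> bool" where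
  "prog_succ p i j \<longleftrightarrow> p i > p j \<or> (p i = p j \<and> i < j)"

definition del_out :: "(nat \<times> nat) set \<Rightarrow> nat \<Rightarrow> (nat \<times> nat) set" where
  "del_out E i = {e \<in> E. fst e \<noteq> i}"

definition influential :: "nat \<Rightarrow> (nat \<times> nat) set \<Rightarrow> nat \<Rightarrow> bool" where
  "influential n E i \<longleftrightarrow> i \<in> nodes n \<and>
     (\<forall>j \<in> nodes n. j \<noteq> i \<longrightarrow> prog_succ (progeny n (del_out E i)) i j)"

definition influential_set :: "nat \<Rightarrow> (nat \<times> nat) set \<Rightarrow> nat set" where
  "influential_set n E = {i. influential n E i}"

end

theory Submission
  imports Defs
begin

text \<open>Let m be the \<open>\<succ>\<close>-greatest node of G. An edge m \<rightarrow> k would make P_m a proper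
  subset of P_k (k lies in P_k but, by acyclicity, not in P_m), contradicting the maximality
  of p_m. So m has no out-edges, deleting them leaves G unchanged, and m is influential.
  Since \<open>\<succ>\<close> is asymmetric and s_1 is the \<open>\<succ>\<close>-greatest influential node, s_1 = m.\<close>

lemma finite_nodes [simp]: "finite (nodes n)"
  unfolding nodes_def by simp

lemma finite_progeny_set [simp]: "finite (progeny_set n E i)"
  unfolding progeny_set_def by simp

lemma prog_succ_asym: "prog_succ p i j \<Longrightarrow> \<not> prog_succ p j i"
  unfolding prog_succ_def by auto

lemma prog_succ_greatest_exists:
  assumes "finite A" and "A \<noteq> {}"
  obtains m where "m \<in> A" and "p m = Max (p ` A)" and "\<And>j. j \<in> A \<Longrightarrow> j \<noteq> m \<Longrightarrow> prog_succ p m j"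
proof -
  define M where "M = Max (p ` A)"
  define m where "m = Min {i \<in> A. p i = M}"
  have "M \<in> p ` A"
    unfolding M_def using assms by simp
  then have "m \<in> {i \<in> A. p i = M}"
    unfolding m_def using assms(1) by (intro Min_in) auto
  moreover have "prog_succ p m j" if "j \<in> A" and "j \<noteq> m" for j
  proof (cases "p j = M")
    case True
    then have "m \<le> j"
      unfolding m_def using assms(1) \<open>j \<in> A\<close> by simp
    with True \<open>j \<noteq> m\<close> \<open>m \<in> {i \<in> A. p i = M}\<close> show ?thesis
      unfolding prog_succ_def by simp
  next
    case False
    have "p j \<le> M"
      unfolding M_def using assms(1) \<open>j \<in> A\<close> by simp
    with False \<open>m \<in> {i \<in> A. p i = M}\<close> show ?thesis
      unfolding prog_succ_def by simp
  qed
  ultimately show ?thesis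
    using that M_def by blast
qed

lemma progeny_set_psubset_of_edge:
  assumes "acyclic E" and "(i, k) \<in> E" and "k \<in> nodes n"
  shows "progeny_set n E i \<subset> progeny_set n E k"
proof -
  have "progeny_set n E i \<subseteq> progeny_set n E k"
    unfolding progeny_set_def using assms(2) by (auto intro: rtrancl_into_rtrancl)
  moreover have "k \<notin> progeny_set n E i"
  proof
    assume "k \<in> progeny_set n E i"
    then have "(k, i) \<in> E\<^sup>*"
      unfolding progeny_set_def by simp
    with assms(2) have "(i, i) \<in> E\<^sup>+"
      by (rule rtrancl_into_trancl2)
    with assms(1) show False
      unfolding acyclic_def by blast
  qed
  moreover have "k \<in> progeny_set n E k"
    unfolding progeny_set_def using assms(3) by simp
  ultimately show ?thesis
    by blast
qed

lemma no_out_edge_of_max_progeny: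
  assumes "is_dag n E" and "\<And>j. j \<in> nodes n \<Longrightarrow> progeny n E j \<le> progeny n E m"
  shows "(m, k) \<notin> E"
proof
  assume edge: "(m, k) \<in> E"
  with assms(1) have "k \<in> nodes n" and "acyclic E"
    unfolding is_dag_def by auto
  with edge have "progeny n E m < progeny n E k"
    unfolding progeny_def by (simp add: progeny_set_psubset_of_edge psubset_card_mono)
  with assms(2)[OF \<open>k \<in> nodes n\<close>] show False
    by simp
qed

lemma del_out_no_out_edge: "(\<And>k. (i, k) \<notin> E) \<Longrightarrow> del_out E i = E"
  unfolding del_out_def by auto

theorem mainTheorem5:
  fixes n :: nat and E :: "(nat \<times> nat) set" and s1 :: nat
  assumes "is_dag n E"
    and "s1 \<in> influential_set n E"
    and "\<forall>t \<in> influential_set n E. t \<noteq> s1 \<longrightarrow> prog_succ (progeny n E) s1 t"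
  shows "(\<forall>j. (s1, j) \<notin> E) \<and> progeny n E s1 = Max (progeny n E ` nodes n)"
proof -
  let ?p = "progeny n E"
  have s1_node: "s1 \<in> nodes n"
    using assms(2) unfolding influential_set_def influential_def by simp
  then obtain m where m_node: "m \<in> nodes n" and m_max: "?p m = Max (?p ` nodes n)"
    and m_greatest: "\<And>j. j \<in> nodes n \<Longrightarrow> j \<noteq> m \<Longrightarrow> prog_succ ?p m j"
    using prog_succ_greatest_exists[of "nodes n" ?p] by auto
  have m_sink: "(m, k) \<notin> E" for k
    by (rule no_out_edge_of_max_progeny[OF assms(1)]) (simp add: m_max)
  then have "m \<in> influential_set n E"
    using m_node m_greatest
    unfolding influential_set_def influential_def by (simp add: del_out_no_out_edge)
  have "s1 = m"
  proof (rule ccontr)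
    assume "s1 \<noteq> m"
    with assms(3) \<open>m \<in> influential_set n E\<close> m_greatest s1_node show False
      using prog_succ_asym by metis
  qed
  with m_sink m_max show ?thesis
    by simp
qed

end
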